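(* Let $0\le\gamma_1<\dots<\gamma_p\le1$, $\boldsymbol\alpha=(\alpha_1,\dots,\alpha_p)\in(0,1)^p$ with $\sum_i\alpha_i=1$, and for each $i$ let $(\gamma_{i,n})_n$ be $[0,1]$-valued with $|\gamma_{i,n}-\gamma_i|=O(1/n)$. Let $\phi_{n,\boldsymbol\alpha,\boldsymbol\gamma_n}(u)=\sum_{i=1}^p\alpha_i\phi_{n,\gamma_{i,n}}(u)$. Then for every $i\in\{1,\dots,p\}$ there exists $\delta_i>0$ such that, whenever $\gamma_i-\delta_i<a<b<\gamma_i$ or $\gamma_i<b<a<\gamma_i+\delta_i$ (with $a,b\in(0,1)$), $\phi_{n,\boldsymbol\alpha,\boldsymbol\gamma_n}'(a)/\phi_{n,\boldsymbol\alpha,\boldsymbol\gamma_n}'(b)\to0$ as $n\to\infty$.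
   Context: $[x]$ is the integer part. $\phi_{n,\alpha}(t)=\sum_{j=1+[(n-1)\alpha]}^n\binom{n}{j}t^j(1-t)^{n-j}$, $t\in[0,1]$. *)

theory Defs
  imports "HOL-Analysis.Analysis"
begin

definition phi :: "nat \<Rightarrow> real \<Rightarrow> real \<Rightarrow> real" where
  "phi n a t = (\<Sum>j = nat (1 + \<lfloor>(real n - 1) * a\<rfloor>)..n.
      real (n choose j) * t ^ j * (1 - t) ^ (n - j))"

text \<open>phi_{n,alpha,gamma_n}(u) = sum_i alpha_i phi_{n,gamma_{i,n}}(u), indices 0..<p\<close>
definition phi_mix :: "nat \<Rightarrow> (nat \<Rightarrow> real) \<Rightarrow> (nat \<Rightarrow> nat \<Rightarrow> real) \<Rightarrow> nat \<Rightarrow> real \<Rightarrow> real" where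
  "phi_mix p \<alpha> \<gamma>n n u = (\<Sum>i<p. \<alpha> i * phi n (\<gamma>n i n) u)"

end

theory Submission
  imports Defs
begin

text \<open>
  The derivative of \<open>phi n \<gamma>\<close> is \<open>n B\<^sub>n\<^sub>-\<^sub>1\<^sub>,\<^sub>k(u)\<close> with \<open>k = \<lfloor>(n-1)\<gamma>\<rfloor>\<close>, because the
  derivative of a binomial tail telescopes. Writing \<open>B\<^sub>N\<^sub>,\<^sub>k(u) = B\<^sub>N\<^sub>,\<^sub>k(k/N) exp (-N KL(k/N \<parallel> u))\<close>
  and using \<open>1/(N+1) \<le> B\<^sub>N\<^sub>,\<^sub>k(k/N) \<le> 1\<close> (the mode carries at least the average mass), the
  ratio of the mixed derivatives at \<open>a\<close> and \<open>b\<close> is at most a weighted sum of terms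
  \<open>(N+1) exp (-N (KL(\<gamma>\<^sub>j \<parallel> a) - KL(\<gamma>\<^sub>i \<parallel> b) + o(1)))\<close>. These vanish once
  \<open>KL(\<gamma>\<^sub>i \<parallel> b) < KL(\<gamma>\<^sub>j \<parallel> a)\<close> for every \<open>j\<close>: for \<open>j = i\<close> because \<open>KL(\<gamma>\<^sub>i \<parallel> \<cdot>)\<close> grows
  strictly away from \<open>\<gamma>\<^sub>i\<close>; for \<open>j \<noteq> i\<close> because \<open>KL(\<gamma>\<^sub>j \<parallel> a)\<close> dominates the Hellinger
  distance of \<open>\<gamma>\<^sub>j\<close> and \<open>a\<close>, which is continuous and positive at \<open>a = \<gamma>\<^sub>i\<close>, while
  \<open>KL(\<gamma>\<^sub>i \<parallel> a) \<rightarrow> 0\<close> as \<open>a \<rightarrow> \<gamma>\<^sub>i\<close>.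
\<close>

subsection \<open>Derivatives of binomial tails\<close>

lemma Bernstein_has_real_derivative:
  assumes "0 < k" "k \<le> n"
  shows "(Bernstein n k has_real_derivative
           real n * (Bernstein (n - 1) (k - 1) t - Bernstein (n - 1) k t)) (at t)"
proof -
  have lower: "real k * real (n choose k) = real n * real ((n - 1) choose (k - 1))"
    using times_binomial_minus1_eq[OF assms(1), of n] by (metis of_nat_mult)
  have upper: "real (n - k) * real (n choose k) = real n * real ((n - 1) choose k)"
    by (metis binomial_absorb_comp of_nat_mult)
  have exps: "n - 1 - (k - 1) = n - k" "n - 1 - k = n - k - 1"
    using assms by auto
  have "(Bernstein n k has_real_derivative
          real (n choose k) * (real k * t ^ (k - 1) * (1 - t) ^ (n - k)
            - real (n - k) * t ^ k * (1 - t) ^ (n - k - 1))) (at t)"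
    unfolding Bernstein_def [abs_def]
    by (rule derivative_eq_intros refl | simp)+ (simp add: algebra_simps)
  also have "real (n choose k) * (real k * t ^ (k - 1) * (1 - t) ^ (n - k)
            - real (n - k) * t ^ k * (1 - t) ^ (n - k - 1))
      = (real k * real (n choose k)) * t ^ (k - 1) * (1 - t) ^ (n - k)
            - (real (n - k) * real (n choose k)) * t ^ k * (1 - t) ^ (n - k - 1)"
    by (simp add: algebra_simps)
  also have "\<dots> = real n * (Bernstein (n - 1) (k - 1) t - Bernstein (n - 1) k t)"
    unfolding lower upper Bernstein_def exps by (simp add: algebra_simps)
  finally show ?thesis .
qed

lemma Bernstein_tail_has_real_derivative:
  assumes "0 < k" "k \<le> n"
  shows "((\<lambda>t. \<Sum>j = k..n. Bernstein n j t) has_real_derivative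
           real n * Bernstein (n - 1) (k - 1) t) (at t)"
  using assms
proof (induction "n - k" arbitrary: k)
  case 0
  then have "k = n" by simp
  with Bernstein_has_real_derivative[OF "0.prems"] show ?case
    by (simp add: Bernstein_def)
next
  case (Suc d)
  then have "k < n" by simp
  have tail: "((\<lambda>t. \<Sum>j = Suc k..n. Bernstein n j t) has_real_derivative
                real n * Bernstein (n - 1) k t) (at t)"
    using Suc.hyps(1)[of "Suc k"] Suc.hyps(2) \<open>k < n\<close> by simp
  have "(\<lambda>t. \<Sum>j = k..n. Bernstein n j t) = (\<lambda>t. Bernstein n k t + (\<Sum>j = Suc k..n. Bernstein n j t))"
    using \<open>k < n\<close> by (simp add: sum.atLeast_Suc_atMost)
  with DERIV_add[OF Bernstein_has_real_derivative[OF Suc.prems] tail] show ?case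
    by (simp add: algebra_simps)
qed

lemma nat_floor_mult_le:
  assumes "0 \<le> g" "g \<le> 1"
  shows "nat \<lfloor>real N * g\<rfloor> \<le> N"
proof -
  have "real N * g \<le> real N"
    using assms by (simp add: mult_left_le)
  then show ?thesis
    by (metis floor_mono floor_of_nat nat_int nat_mono)
qed

lemma phi_has_real_derivative:
  assumes "1 \<le> n" "0 \<le> g" "g \<le> 1"
  shows "(phi n g has_real_derivative real n * Bernstein (n - 1) (nat \<lfloor>(real n - 1) * g\<rfloor>) t) (at t)"
proof -
  define k where "k = nat \<lfloor>(real n - 1) * g\<rfloor>"
  have "k \<le> n - 1"
    using nat_floor_mult_le [of g "n - 1"] assms by (simp add: k_def of_nat_diff)
  moreover have "phi n g = (\<lambda>t. \<Sum>j = Suc k..n. Bernstein n j t)"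
    using assms unfolding phi_def k_def Bernstein_def by (simp add: Suc_nat_eq_nat_zadd1 add.commute)
  ultimately show ?thesis
    using Bernstein_tail_has_real_derivative [of "Suc k" n t] assms by (simp add: k_def)
qed

lemma deriv_phi_mix:
  assumes "1 \<le> n" "\<And>i. i < p \<Longrightarrow> 0 \<le> \<gamma>n i n \<and> \<gamma>n i n \<le> 1"
  shows "deriv (phi_mix p \<alpha> \<gamma>n n) t =
           (\<Sum>i<p. \<alpha> i * (real n * Bernstein (n - 1) (nat \<lfloor>(real n - 1) * \<gamma>n i n\<rfloor>) t))"
  unfolding phi_mix_def
  by (intro DERIV_imp_deriv DERIV_sum DERIV_cmult phi_has_real_derivative) (use assms in auto)

subsection \<open>The mode of the binomial distribution\<close>

lemma Bernstein_Suc_ratio: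
  assumes "m < N"
  shows "Bernstein N (Suc m) x * (real (Suc m) * (1 - x)) = Bernstein N m x * (real (N - m) * x)"
proof -
  have choose: "real (Suc m) * real (N choose Suc m) = real (N - m) * real (N choose m)"
    by (metis Suc_times_binomial_eq binomial_absorb_comp diff_Suc_1 of_nat_mult
        times_binomial_minus1_eq zero_less_Suc)
  obtain r where r: "N - m = Suc r"
    using assms by (cases "N - m") auto
  then have "N - Suc m = r"
    by simp
  have "Bernstein N (Suc m) x * (real (Suc m) * (1 - x))
      = (real (Suc m) * real (N choose Suc m)) * x ^ m * (1 - x) ^ Suc r * x"
    unfolding Bernstein_def \<open>N - Suc m = r\<close> by (simp add: algebra_simps)
  also have "\<dots> = Bernstein N m x * (real (N - m) * x)"
    unfolding choose Bernstein_def r by (simp add: algebra_simps)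
  finally show ?thesis .
qed

lemma Bernstein_Suc_ge_below_mode:
  assumes "m < k" "k \<le> N"
  shows "Bernstein N m (real k / real N) \<le> Bernstein N (Suc m) (real k / real N)"
proof -
  define x where "x = real k / real N"
  have x: "0 < x" "x \<le> 1" "real N * x = real k"
    using assms unfolding x_def by auto
  have "real (Suc m) * real N \<le> real k * real N"
    using assms by (intro mult_right_mono) auto
  moreover have "real N * (real (Suc m) * (1 - x)) = real (Suc m) * real N - real (Suc m) * real k"
    using x(3) by (simp add: algebra_simps)
  moreover have "real N * (real (N - m) * x) = real k * real N - real m * real k"
    using x(3) assms by (simp add: algebra_simps of_nat_diff)
  ultimately have "real N * (real (Suc m) * (1 - x)) \<le> real N * (real (N - m) * x)"
    by (simp add: algebra_simps)
  then have step_le: "real (Suc m) * (1 - x) \<le> real (N - m) * x"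
    using assms by simp
  have "Bernstein N m x * (real (N - m) * x) = Bernstein N (Suc m) x * (real (Suc m) * (1 - x))"
    using Bernstein_Suc_ratio[of m N x] assms by simp
  also have "\<dots> \<le> Bernstein N (Suc m) x * (real (N - m) * x)"
    using step_le x by (intro mult_left_mono Bernstein_nonneg) auto
  finally show ?thesis
    unfolding x_def [symmetric] by (rule mult_right_le_imp_le) (use assms x in simp)
qed

lemma Bernstein_Suc_le_above_mode:
  assumes "k \<le> m" "m < N"
  shows "Bernstein N (Suc m) (real k / real N) \<le> Bernstein N m (real k / real N)"
proof -
  define x where "x = real k / real N"
  have x: "0 \<le> x" "x < 1" "real N * x = real k"
    using assms unfolding x_def by auto
  have "real k * real N \<le> real m * real N"
    using assms by (intro mult_right_mono) auto
  moreover have "real N * (real (Suc m) * (1 - x)) = real (Suc m) * real N - real (Suc m) * real k"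
    using x(3) by (simp add: algebra_simps)
  moreover have "real N * (real (N - m) * x) = real k * real N - real m * real k"
    using x(3) assms by (simp add: algebra_simps of_nat_diff)
  moreover have "real k \<le> real N"
    using assms by simp
  ultimately have "real N * (real (N - m) * x) \<le> real N * (real (Suc m) * (1 - x))"
    by (simp add: algebra_simps)
  then have step_le: "real (N - m) * x \<le> real (Suc m) * (1 - x)"
    using assms by simp
  have "Bernstein N (Suc m) x * (real (Suc m) * (1 - x)) = Bernstein N m x * (real (N - m) * x)"
    using Bernstein_Suc_ratio[OF assms(2)] .
  also have "\<dots> \<le> Bernstein N m x * (real (Suc m) * (1 - x))"
    using step_le x by (intro mult_left_mono Bernstein_nonneg) auto
  finally show ?thesis
    unfolding x_def [symmetric] by (rule mult_right_le_imp_le) (use x in simp)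
qed

lemma Bernstein_le_mode:
  assumes "k \<le> N" "l \<le> N"
  shows "Bernstein N l (real k / real N) \<le> Bernstein N k (real k / real N)"
proof (cases "l \<le> k")
  case True
  then show ?thesis
  proof (induction rule: inc_induct)
    case (step m)
    with Bernstein_Suc_ge_below_mode[OF step(2) assms(1)] show ?case by simp
  qed simp
next
  case False
  then have "k \<le> l" by simp
  then show ?thesis using assms(2)
  proof (induction rule: dec_induct)
    case (step m)
    with Bernstein_Suc_le_above_mode[of k m N] show ?case by simp
  qed simp
qed

lemma Bernstein_mode_ge:
  assumes "k \<le> N"
  shows "1 / (real N + 1) \<le> Bernstein N k (real k / real N)"
proof -
  have "1 = (\<Sum>l\<le>N. Bernstein N l (real k / real N))"
    by simp
  also have "\<dots> \<le> (\<Sum>l\<le>N. Bernstein N k (real k / real N))"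
    using assms by (intro sum_mono Bernstein_le_mode) auto
  finally show ?thesis
    by (simp add: field_simps)
qed

lemma Bernstein_le_1:
  assumes "0 \<le> x" "x \<le> 1" "k \<le> N"
  shows "Bernstein N k x \<le> 1"
proof -
  have "Bernstein N k x \<le> (\<Sum>j\<le>N. Bernstein N j x)"
    using assms by (intro member_le_sum Bernstein_nonneg) auto
  then show ?thesis
    by simp
qed

subsection \<open>Binomial probabilities and relative entropy\<close>

text \<open>Binary relative entropy \<open>KL(x \<parallel> u)\<close>; since \<open>ln 0 = 0\<close>, the convention \<open>0 ln 0 = 0\<close> is built in.\<close>

definition bin_kl :: "real \<Rightarrow> real \<Rightarrow> real" where
  "bin_kl x u = x * ln x + (1 - x) * ln (1 - x) - (x * ln u + (1 - x) * ln (1 - u))"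

lemma Bernstein_eq_exp:
  assumes "k \<le> N" "0 \<le> u" "u \<le> 1" "u = 0 \<Longrightarrow> k = 0" "u = 1 \<Longrightarrow> k = N"
  shows "Bernstein N k u = real (N choose k) * exp (real k * ln u + real (N - k) * ln (1 - u))"
proof -
  have pow: "y ^ j = exp (real j * ln y)" if "0 \<le> y" "y = 0 \<Longrightarrow> j = 0" for y :: real and j
    using that by (cases "y = 0") (auto simp: exp_of_nat_mult)
  show ?thesis
    unfolding Bernstein_def pow[of u k] pow[of "1 - u" "N - k"]
    using assms by (simp add: exp_add pow)
qed

lemma Bernstein_eq_mode_exp_bin_kl:
  assumes "1 \<le> N" "k \<le> N" "0 < u" "u < 1"
  shows "Bernstein N k u = Bernstein N k (real k / real N) * exp (- (real N * bin_kl (real k / real N) u))"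
proof -
  define x where "x = real k / real N"
  have k: "real k = real N * x" "real (N - k) = real N * (1 - x)"
    using assms unfolding x_def by (auto simp: of_nat_diff field_simps)
  have x: "0 \<le> x" "x \<le> 1" "x = 0 \<Longrightarrow> k = 0" "x = 1 \<Longrightarrow> k = N"
    using assms unfolding x_def by (auto simp: field_simps)
  have "Bernstein N k u = real (N choose k) * exp (real N * (x * ln u + (1 - x) * ln (1 - u)))"
    using Bernstein_eq_exp[of k N u] assms unfolding k by (simp add: algebra_simps)
  moreover have "Bernstein N k x = real (N choose k) * exp (real N * (x * ln x + (1 - x) * ln (1 - x)))"
    using Bernstein_eq_exp[of k N x] assms x unfolding k by (simp add: algebra_simps)
  ultimately show ?thesis
    unfolding x_def [symmetric] bin_kl_def by (simp add: algebra_simps flip: exp_add)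
qed

lemma Bernstein_ratio_le:
  assumes "1 \<le> N" "k \<le> N" "l \<le> N" "0 < u" "u < 1" "0 < v" "v < 1"
  shows "Bernstein N k u / Bernstein N l v
           \<le> (real N + 1) * exp (- (real N * (bin_kl (real k / real N) u - bin_kl (real l / real N) v)))"
proof -
  define Eu where "Eu = exp (- (real N * bin_kl (real k / real N) u))"
  define Ev where "Ev = exp (- (real N * bin_kl (real l / real N) v))"
  have "Bernstein N k u \<le> Eu"
    using Bernstein_eq_mode_exp_bin_kl[of N k u] Bernstein_le_1[of "real k / real N" k N] assms
    unfolding Eu_def by (simp add: mult_le_cancel_right1)
  moreover have "Ev / (real N + 1) \<le> Bernstein N l v"
  proof -
    have "Ev / (real N + 1) = 1 / (real N + 1) * Ev"
      by simp
    also have "\<dots> \<le> Bernstein N l (real l / real N) * Ev"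
      using Bernstein_mode_ge[OF assms(3)] unfolding Ev_def by (intro mult_right_mono) auto
    finally show ?thesis
      using Bernstein_eq_mode_exp_bin_kl[of N l v] assms unfolding Ev_def by simp
  qed
  moreover have "0 < Ev / (real N + 1)"
    unfolding Ev_def by simp
  ultimately have "Bernstein N k u / Bernstein N l v \<le> Eu / (Ev / (real N + 1))"
    using Bernstein_nonneg[of u N k] assms by (intro frac_le) auto
  also have "\<dots> = (real N + 1) * exp (- (real N * (bin_kl (real k / real N) u - bin_kl (real l / real N) v)))"
    unfolding Eu_def Ev_def by (simp add: exp_diff [symmetric] exp_minus field_simps algebra_simps)
  finally show ?thesis .
qed

lemma abs_x_ln_x_le:
  assumes "0 \<le> t" "t \<le> 1"
  shows "\<bar>t * ln t\<bar> \<le> 2 * sqrt t"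
proof (cases "t = 0")
  case False
  with assms have t: "0 < t" by simp
  have "- ln t = 2 * ln (1 / sqrt t)"
    using t by (simp add: ln_div ln_sqrt)
  also have "\<dots> \<le> 2 * (1 / sqrt t)"
    using t ln_le_minus_one[of "1 / sqrt t"] by simp
  finally have "t * - ln t \<le> t * (2 * (1 / sqrt t))"
    using t by (intro mult_left_mono) auto
  also have "\<dots> = 2 * (t / sqrt t)"
    by simp
  also have "\<dots> = 2 * sqrt t"
    using t by (simp add: real_div_sqrt)
  moreover have "t * ln t \<le> 0"
    using t assms by (simp add: mult_nonneg_nonpos)
  ultimately show ?thesis
    by (simp add: abs_of_nonpos)
qed simp

lemma continuous_on_x_ln_x: "continuous_on {0..1} (\<lambda>x::real. x * ln x)"
proof (rule continuous_on_eq_continuous_within [THEN iffD2], intro ballI)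
  fix x :: real
  assume x: "x \<in> {0..1}"
  show "continuous (at x within {0..1}) (\<lambda>x. x * ln x)"
  proof (cases "x = 0")
    case True
    have "eventually (\<lambda>t::real. norm (t * ln t) \<le> 2 * sqrt t) (at 0 within {0..1})"
      unfolding eventually_at_filter by (intro always_eventually) (simp add: abs_x_ln_x_le)
    moreover have "((\<lambda>t. 2 * sqrt t) \<longlongrightarrow> 2 * sqrt 0) (at (0::real) within {0..1})"
      by (intro tendsto_intros)
    then have "((\<lambda>t. 2 * sqrt t) \<longlongrightarrow> 0) (at (0::real) within {0..1})"
      by simp
    ultimately have "((\<lambda>t::real. t * ln t) \<longlongrightarrow> 0) (at 0 within {0..1})"
      by (rule Lim_null_comparison)
    with True show ?thesis
      unfolding continuous_within by simp
  next
    case False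
    show ?thesis
      by (rule continuous_at_imp_continuous_within, intro continuous_intros) (use False in simp)
  qed
qed

lemma tendsto_bin_kl:
  fixes f :: "nat \<Rightarrow> real"
  assumes "\<And>n. 0 \<le> f n \<and> f n \<le> 1" "f \<longlonglongrightarrow> c"
  shows "(\<lambda>n. bin_kl (f n) u) \<longlonglongrightarrow> bin_kl c u"
proof -
  have "0 \<le> c" "c \<le> 1"
    using assms by (auto intro: tendsto_lowerbound tendsto_upperbound always_eventually)
  have "(\<lambda>x::real. 1 - x) ` {0..1} \<subseteq> {0..1}"
    by auto
  from continuous_on_compose2[OF continuous_on_x_ln_x _ this]
  have "continuous_on {0..1} (\<lambda>x::real. (1 - x) * ln (1 - x))"
    by (simp add: continuous_on_diff)
  moreover have "continuous_on {0..1} (\<lambda>x::real. x * ln u + (1 - x) * ln (1 - u))"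
    by (intro continuous_intros)
  ultimately have "continuous_on {0..1} (\<lambda>x. bin_kl x u)"
    unfolding bin_kl_def by (intro continuous_on_diff continuous_on_add [OF continuous_on_x_ln_x])
  from continuous_on_tendsto_compose[OF this assms(2)] show ?thesis
    using assms(1) \<open>0 \<le> c\<close> \<open>c \<le> 1\<close> by simp
qed

lemma isCont_bin_kl_self:
  assumes "0 \<le> x" "x \<le> 1"
  shows "isCont (bin_kl x) x"
proof -
  consider "x = 0" | "x = 1" | "0 < x \<and> x < 1"
    using assms by linarith
  then show ?thesis
  proof cases
    case 1
    then have "bin_kl x = (\<lambda>u. - ln (1 - u))"
      unfolding bin_kl_def by auto
    with 1 show ?thesis
      by (auto intro!: continuous_intros)
  next
    case 2
    then have "bin_kl x = (\<lambda>u. - ln u)"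
      unfolding bin_kl_def by auto
    with 2 show ?thesis
      by (auto intro!: continuous_intros)
  next
    case 3
    then show ?thesis
      unfolding bin_kl_def [abs_def] by (auto intro!: continuous_intros)
  qed
qed

text \<open>Twice the squared Hellinger distance between the Bernoulli laws with parameters \<open>x\<close> and \<open>a\<close>.\<close>

definition hellinger_sq :: "real \<Rightarrow> real \<Rightarrow> real" where
  "hellinger_sq x a = (sqrt x - sqrt a)\<^sup>2 + (sqrt (1 - x) - sqrt (1 - a))\<^sup>2"

lemma x_ln_ratio_ge:
  assumes "0 \<le> x" "0 < a"
  shows "2 * x - 2 * sqrt (x * a) \<le> x * ln x - x * ln a"
proof (cases "x = 0")
  case False
  with assms have x: "0 < x" by simp
  have "ln (a / x) = 2 * ln (sqrt (a / x))"
    using x assms by (simp add: ln_sqrt)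
  also have "\<dots> \<le> 2 * (sqrt (a / x) - 1)"
    using ln_le_minus_one[of "sqrt (a / x)"] x assms by simp
  finally have "x * ln (a / x) \<le> x * (2 * (sqrt (a / x) - 1))"
    using x by (intro mult_left_mono) auto
  moreover have "x * ln (a / x) = x * ln a - x * ln x"
    using x assms by (simp add: ln_div algebra_simps)
  moreover have "x * sqrt (a / x) = sqrt (x * a)"
  proof -
    have "x * sqrt (a / x) = sqrt (x\<^sup>2) * sqrt (a / x)"
      using x by simp
    also have "\<dots> = sqrt (x\<^sup>2 * (a / x))"
      by (rule real_sqrt_mult [symmetric])
    also have "x\<^sup>2 * (a / x) = x * a"
      using x by (simp add: power2_eq_square)
    finally show ?thesis .
  qed
  ultimately show ?thesis
    by (simp add: algebra_simps)
qed simp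

lemma hellinger_sq_le_bin_kl:
  assumes "0 \<le> x" "x \<le> 1" "0 < a" "a < 1"
  shows "hellinger_sq x a \<le> bin_kl x a"
proof -
  have "hellinger_sq x a = 2 - 2 * sqrt (x * a) - 2 * sqrt ((1 - x) * (1 - a))"
    using assms unfolding hellinger_sq_def real_sqrt_mult power2_diff by (simp add: algebra_simps)
  then show ?thesis
    using x_ln_ratio_ge[of x a] x_ln_ratio_ge[of "1 - x" "1 - a"] assms
    unfolding bin_kl_def by simp
qed

lemma hellinger_sq_pos:
  assumes "0 \<le> x" "0 \<le> a" "x \<noteq> a"
  shows "0 < hellinger_sq x a"
proof -
  have "0 < (sqrt x - sqrt a)\<^sup>2"
    using assms by simp
  then show ?thesis
    unfolding hellinger_sq_def by (simp add: add_pos_nonneg)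
qed

lemma bin_kl_less:
  assumes "0 \<le> x" "x \<le> 1" "0 < a" "a < 1" "0 < b" "b < 1"
    and "(a < b \<and> b \<le> x) \<or> (x \<le> b \<and> b < a)"
  shows "bin_kl x b < bin_kl x a"
proof -
  define c where "c = ln b - ln a - ln (1 - b) + ln (1 - a)"
  have split: "bin_kl x a - bin_kl x b = bin_kl b a + (x - b) * c"
    unfolding bin_kl_def c_def by (simp add: algebra_simps)
  have "0 < bin_kl b a"
    using hellinger_sq_le_bin_kl[of b a] hellinger_sq_pos[of b a] assms by fastforce
  moreover have "0 \<le> (x - b) * c"
    using assms(7)
  proof
    assume "a < b \<and> b \<le> x"
    then have "0 \<le> c"
      using assms unfolding c_def by (smt (verit) ln_less_cancel_iff)
    with \<open>a < b \<and> b \<le> x\<close> show ?thesis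
      by simp
  next
    assume "x \<le> b \<and> b < a"
    then have "c \<le> 0"
      using assms unfolding c_def by (smt (verit) ln_less_cancel_iff)
    with \<open>x \<le> b \<and> b < a\<close> show ?thesis
      by (simp add: mult_nonpos_nonpos)
  qed
  ultimately show ?thesis
    using split by simp
qed

lemma eventually_bin_kl_less_hellinger_sq:
  assumes "finite J" "0 \<le> x" "x \<le> 1" "\<And>j. j \<in> J \<Longrightarrow> 0 \<le> y j \<and> y j \<noteq> x"
  shows "eventually (\<lambda>a. \<forall>j\<in>J. bin_kl x a < hellinger_sq (y j) a) (at x)"
  using assms(1)
proof (rule eventually_ball_finite, intro ballI)
  fix j
  assume "j \<in> J"
  have "isCont (\<lambda>a. hellinger_sq (y j) a - bin_kl x a) x"
    unfolding hellinger_sq_def using isCont_bin_kl_self [OF assms(2,3)]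
    by (intro continuous_intros)
  moreover have "0 < hellinger_sq (y j) x - bin_kl x x"
    using hellinger_sq_pos [of "y j" x] assms(2) assms(4)[OF \<open>j \<in> J\<close>] by (simp add: bin_kl_def)
  ultimately have "eventually (\<lambda>a. 0 < hellinger_sq (y j) a - bin_kl x a) (at x)"
    unfolding isCont_def by (rule order_tendstoD)
  then show "eventually (\<lambda>a. bin_kl x a < hellinger_sq (y j) a) (at x)"
    by eventually_elim simp
qed

subsection \<open>Exponential decay of the derivative ratio\<close>

lemma bigo_inverse_imp_tendsto_0:
  fixes f :: "nat \<Rightarrow> real"
  assumes "f \<in> O(\<lambda>n. 1 / real n)"
  shows "f \<longlonglongrightarrow> 0"
proof -
  obtain C where "C > 0" and C: "eventually (\<lambda>n. norm (f n) \<le> C * norm (1 / real n)) sequentially"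
    using assms by (elim landau_o.bigE)
  show ?thesis
  proof (rule Lim_null_comparison)
    show "eventually (\<lambda>n. norm (f n) \<le> C / real n) sequentially"
      using C by eventually_elim simp
  qed (rule lim_const_over_n)
qed

lemma tendsto_real_plus_1_times_exp_neg_0:
  assumes "0 < c"
  shows "(\<lambda>n. (real n + 1) * exp (- (c * real n))) \<longlonglongrightarrow> 0"
proof -
  have "filterlim (\<lambda>n. c * real n) at_top sequentially"
    using filterlim_tendsto_pos_mult_at_top[OF tendsto_const assms filterlim_real_sequentially] .
  then have "(\<lambda>n. (c * real n) ^ k / exp (c * real n)) \<longlonglongrightarrow> 0" for k
    by (rule filterlim_compose[OF tendsto_power_div_exp_0])
  from tendsto_add[OF tendsto_divide_zero[OF this[of 1], of c] this[of 0]] show ?thesis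
    using assms by (simp add: exp_minus field_simps)
qed

lemma tendsto_floor_mult_div:
  fixes g :: "nat \<Rightarrow> real"
  assumes "\<And>N. 0 \<le> g N" "g \<longlonglongrightarrow> c"
  shows "(\<lambda>N. real (nat \<lfloor>real N * g N\<rfloor>) / real N) \<longlonglongrightarrow> c"
proof -
  have "(\<lambda>N. real (nat \<lfloor>real N * g N\<rfloor>) / real N - g N) \<longlonglongrightarrow> 0"
  proof (rule Lim_null_comparison [OF _ lim_const_over_n [of 1]])
    show "eventually (\<lambda>N. norm (real (nat \<lfloor>real N * g N\<rfloor>) / real N - g N) \<le> 1 / real N) sequentially"
      using eventually_gt_at_top [of 0]
    proof eventually_elim
      case (elim N)
      have "real (nat \<lfloor>real N * g N\<rfloor>) / real N - g N = (of_int \<lfloor>real N * g N\<rfloor> - real N * g N) / real N"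
        using assms(1) elim by (simp add: field_simps)
      moreover have "\<bar>of_int \<lfloor>real N * g N\<rfloor> - real N * g N\<bar> \<le> 1"
        using of_int_floor_le [of "real N * g N"] real_of_int_floor_gt_diff_one [of "real N * g N"]
        by linarith
      ultimately show ?case
        by (simp add: abs_divide divide_right_mono)
    qed
  qed
  from tendsto_add [OF this assms(2)] show ?thesis
    by simp
qed

lemma Bernstein_ratio_tendsto_0:
  fixes k l :: "nat \<Rightarrow> nat"
  assumes "\<And>N. k N \<le> N" "\<And>N. l N \<le> N"
    and "(\<lambda>N. real (k N) / real N) \<longlonglongrightarrow> x" "(\<lambda>N. real (l N) / real N) \<longlonglongrightarrow> y"
    and "0 < a" "a < 1" "0 < b" "b < 1"
    and "bin_kl y b < bin_kl x a"
  shows "(\<lambda>N. Bernstein N (k N) a / Bernstein N (l N) b) \<longlonglongrightarrow> 0"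
proof -
  define c where "c = bin_kl x a - bin_kl y b"
  have "0 < c"
    using assms(9) by (simp add: c_def)
  have frac: "0 \<le> real (j N) / real N \<and> real (j N) / real N \<le> 1"
    if "\<And>N. j N \<le> N" for j :: "nat \<Rightarrow> nat" and N
    using that[of N] by (cases "N = 0") (auto simp: divide_le_eq_1)
  have "(\<lambda>N. bin_kl (real (k N) / real N) a - bin_kl (real (l N) / real N) b) \<longlonglongrightarrow> c"
    unfolding c_def using assms(1-4)
    by (intro tendsto_diff tendsto_bin_kl frac) auto
  then have "eventually (\<lambda>N. c / 2 < bin_kl (real (k N) / real N) a - bin_kl (real (l N) / real N) b) sequentially"
    using \<open>0 < c\<close> by (intro order_tendstoD(1)) auto
  then have "eventually (\<lambda>N. norm (Bernstein N (k N) a / Bernstein N (l N) b)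
                \<le> (real N + 1) * exp (- (c / 2 * real N))) sequentially"
    using eventually_ge_at_top [of 1]
  proof eventually_elim
    case (elim N)
    have "Bernstein N (k N) a / Bernstein N (l N) b
        \<le> (real N + 1) * exp (- (real N * (bin_kl (real (k N) / real N) a - bin_kl (real (l N) / real N) b)))"
      using assms elim by (intro Bernstein_ratio_le) auto
    also have "\<dots> \<le> (real N + 1) * exp (- (c / 2 * real N))"
      using elim by (intro mult_left_mono) (auto simp: mult.commute)
    finally show ?case
      using Bernstein_nonneg [of a N "k N"] Bernstein_nonneg [of b N "l N"] assms by simp
  qed
  then show ?thesis
    by (rule Lim_null_comparison) (rule tendsto_real_plus_1_times_exp_neg_0, simp add: \<open>0 < c\<close>)
qed

lemma sum_divide_sum_le:
  fixes w x y :: "'a \<Rightarrow> real"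
  assumes "finite A" "i \<in> A" "\<And>j. j \<in> A \<Longrightarrow> 0 \<le> w j" "\<And>j. j \<in> A \<Longrightarrow> 0 \<le> x j"
    "\<And>j. j \<in> A \<Longrightarrow> 0 \<le> y j" "0 < w i" "0 < y i"
  shows "(\<Sum>j\<in>A. w j * x j) / (\<Sum>j\<in>A. w j * y j) \<le> (\<Sum>j\<in>A. w j / w i * (x j / y i))"
proof -
  have pos: "0 < w i * y i"
    using assms by simp
  have le: "w i * y i \<le> (\<Sum>j\<in>A. w j * y j)"
    using assms by (intro member_le_sum mult_nonneg_nonneg) auto
  have "0 \<le> (\<Sum>j\<in>A. w j * x j)"
    using assms by (intro sum_nonneg mult_nonneg_nonneg) auto
  from divide_left_mono [OF le this mult_pos_pos [OF less_le_trans [OF pos le] pos]]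
  have "(\<Sum>j\<in>A. w j * x j) / (\<Sum>j\<in>A. w j * y j) \<le> (\<Sum>j\<in>A. w j * x j) / (w i * y i)" .
  also have "\<dots> = (\<Sum>j\<in>A. w j / w i * (x j / y i))"
    by (simp add: sum_divide_distrib)
  finally show ?thesis .
qed

lemma phi_mix_deriv_ratio_tendsto_0:
  fixes \<gamma> \<alpha> :: "nat \<Rightarrow> real" and \<gamma>n :: "nat \<Rightarrow> nat \<Rightarrow> real"
  assumes "i < p" "\<And>j. j < p \<Longrightarrow> 0 < \<alpha> j"
    and \<gamma>n_range: "\<And>j n. j < p \<Longrightarrow> 0 \<le> \<gamma>n j n \<and> \<gamma>n j n \<le> 1"
    and \<gamma>n_lim: "\<And>j. j < p \<Longrightarrow> (\<lambda>n. \<gamma>n j n) \<longlonglongrightarrow> \<gamma> j"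
    and ab: "0 < a" "a < 1" "0 < b" "b < 1"
    and kl: "\<And>j. j < p \<Longrightarrow> bin_kl (\<gamma> i) b < bin_kl (\<gamma> j) a"
  shows "(\<lambda>n. deriv (phi_mix p \<alpha> \<gamma>n n) a / deriv (phi_mix p \<alpha> \<gamma>n n) b) \<longlonglongrightarrow> 0"
proof -
  \<comment> \<open>index by the Bernstein degree \<open>N = n - 1\<close>\<close>
  define m where "m j N = nat \<lfloor>real N * \<gamma>n j (Suc N)\<rfloor>" for j N
  define r where "r = (\<lambda>n. deriv (phi_mix p \<alpha> \<gamma>n n) a / deriv (phi_mix p \<alpha> \<gamma>n n) b)"
  define T where "T j N = Bernstein N (m j N) a / Bernstein N (m i N) b" for j N
  have \<alpha>_nonneg: "0 \<le> \<alpha> j" if "j < p" for j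
    using assms(2)[OF that] by simp
  have m_le: "m j N \<le> N" if "j < p" for j N
    unfolding m_def using \<gamma>n_range[OF that] by (intro nat_floor_mult_le) auto
  have deriv_eq: "deriv (phi_mix p \<alpha> \<gamma>n (Suc N)) t = real (Suc N) * (\<Sum>j<p. \<alpha> j * Bernstein N (m j N) t)"
    for N t
    using deriv_phi_mix[of "Suc N" p \<gamma>n \<alpha> t] \<gamma>n_range
    by (simp add: m_def sum_distrib_left algebra_simps)
  have T_lim: "T j \<longlonglongrightarrow> 0" if "j < p" for j
    unfolding T_def
  proof (rule Bernstein_ratio_tendsto_0[OF m_le[OF that] m_le[OF \<open>i < p\<close>] _ _ ab kl[OF that]])
    show "(\<lambda>N. real (m j N) / real N) \<longlonglongrightarrow> \<gamma> j" "(\<lambda>N. real (m i N) / real N) \<longlonglongrightarrow> \<gamma> i"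
      unfolding m_def using \<gamma>n_range \<open>j < p\<close> \<open>i < p\<close>
      by (intro tendsto_floor_mult_div LIMSEQ_Suc \<gamma>n_lim; auto)+
  qed
  have bounds: "0 \<le> r (Suc N) \<and> r (Suc N) \<le> (\<Sum>j<p. \<alpha> j / \<alpha> i * T j N)" for N
  proof -
    have "r (Suc N) = (\<Sum>j<p. \<alpha> j * Bernstein N (m j N) a) / (\<Sum>j<p. \<alpha> j * Bernstein N (m j N) b)"
      unfolding r_def deriv_eq by simp
    moreover have "(\<Sum>j<p. \<alpha> j * Bernstein N (m j N) a) / (\<Sum>j<p. \<alpha> j * Bernstein N (m j N) b)
        \<le> (\<Sum>j<p. \<alpha> j / \<alpha> i * T j N)"
      unfolding T_def using assms \<alpha>_nonneg m_le
      by (intro sum_divide_sum_le) (auto intro: Bernstein_nonneg Bernstein_pos)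
    moreover have "0 \<le> (\<Sum>j<p. \<alpha> j * Bernstein N (m j N) a) / (\<Sum>j<p. \<alpha> j * Bernstein N (m j N) b)"
      using assms \<alpha>_nonneg by (intro divide_nonneg_nonneg sum_nonneg mult_nonneg_nonneg Bernstein_nonneg) auto
    ultimately show ?thesis
      by simp
  qed
  have lim: "(\<lambda>N. \<Sum>j<p. \<alpha> j / \<alpha> i * T j N) \<longlonglongrightarrow> 0"
    using T_lim by (intro tendsto_null_sum tendsto_mult_right_zero) auto
  have "\<forall>N. 0 \<le> r (Suc N)" "\<forall>N. r (Suc N) \<le> (\<Sum>j<p. \<alpha> j / \<alpha> i * T j N)"
    using bounds by blast+
  from tendsto_sandwich [OF always_eventually [OF this(1)] always_eventually [OF this(2)] tendsto_const lim]
  have "(\<lambda>N. r (Suc N)) \<longlonglongrightarrow> 0" .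
  then have "r \<longlonglongrightarrow> 0"
    by (simp only: filterlim_sequentially_Suc)
  then show ?thesis
    by (simp only: r_def)
qed

lemma bin_kl_separation:
  fixes \<gamma> :: "nat \<Rightarrow> real"
  assumes "i < p" "\<And>j. j < p \<Longrightarrow> 0 \<le> \<gamma> j \<and> \<gamma> j \<le> 1" "\<And>j. j < p \<Longrightarrow> j \<noteq> i \<Longrightarrow> \<gamma> j \<noteq> \<gamma> i"
  obtains \<delta> where "\<delta> > 0"
    and "\<And>a b j. 0 < a \<Longrightarrow> a < 1 \<Longrightarrow> 0 < b \<Longrightarrow> b < 1 \<Longrightarrow>
           (\<gamma> i - \<delta> < a \<and> a < b \<and> b < \<gamma> i) \<or> (\<gamma> i < b \<and> b < a \<and> a < \<gamma> i + \<delta>) \<Longrightarrow> j < p \<Longrightarrow>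
           bin_kl (\<gamma> i) b < bin_kl (\<gamma> j) a"
proof -
  have "eventually (\<lambda>a. \<forall>j\<in>{..<p} - {i}. bin_kl (\<gamma> i) a < hellinger_sq (\<gamma> j) a) (at (\<gamma> i))"
    using assms by (intro eventually_bin_kl_less_hellinger_sq) auto
  then obtain \<delta> where "\<delta> > 0" and \<delta>: "\<And>a j. a \<noteq> \<gamma> i \<Longrightarrow> \<bar>a - \<gamma> i\<bar> < \<delta> \<Longrightarrow> j < p \<Longrightarrow> j \<noteq> i
      \<Longrightarrow> bin_kl (\<gamma> i) a < hellinger_sq (\<gamma> j) a"
    unfolding eventually_at dist_real_def by auto
  show thesis
  proof (rule that [OF \<open>\<delta> > 0\<close>])
    fix a b j
    assume ab: "0 < a" "a < 1" "0 < b" "b < 1"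
      and near: "(\<gamma> i - \<delta> < a \<and> a < b \<and> b < \<gamma> i) \<or> (\<gamma> i < b \<and> b < a \<and> a < \<gamma> i + \<delta>)"
      and "j < p"
    have b_closer: "bin_kl (\<gamma> i) b < bin_kl (\<gamma> i) a"
      using assms(1,2) ab near by (intro bin_kl_less) auto
    show "bin_kl (\<gamma> i) b < bin_kl (\<gamma> j) a"
    proof (cases "j = i")
      case False
      have "bin_kl (\<gamma> i) a < hellinger_sq (\<gamma> j) a"
        using \<delta> [of a j] near False \<open>j < p\<close> by auto
      also have "\<dots> \<le> bin_kl (\<gamma> j) a"
        using hellinger_sq_le_bin_kl [of "\<gamma> j" a] assms(2) [OF \<open>j < p\<close>] ab by simp
      finally show ?thesis
        using b_closer by simp
    qed (use b_closer in simp)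
  qed
qed

theorem proposition5p2:
  fixes p :: nat and \<gamma> \<alpha> :: "nat \<Rightarrow> real" and \<gamma>n :: "nat \<Rightarrow> nat \<Rightarrow> real"
  assumes \<gamma>_range: "\<And>i. i < p \<Longrightarrow> 0 \<le> \<gamma> i \<and> \<gamma> i \<le> 1"
    and \<gamma>_strict: "\<And>i j. i < j \<Longrightarrow> j < p \<Longrightarrow> \<gamma> i < \<gamma> j"
    and \<alpha>_range: "\<And>i. i < p \<Longrightarrow> 0 < \<alpha> i \<and> \<alpha> i < 1"
    and \<alpha>_sum: "(\<Sum>i<p. \<alpha> i) = 1"
    and \<gamma>n_range: "\<And>i n. i < p \<Longrightarrow> 0 \<le> \<gamma>n i n \<and> \<gamma>n i n \<le> 1"
    and \<gamma>n_rate: "\<And>i. i < p \<Longrightarrow> (\<lambda>n. \<gamma>n i n - \<gamma> i) \<in> O(\<lambda>n. 1 / real n)"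
  shows "\<forall>i<p. \<exists>\<delta>>0. \<forall>a b. 0 < a \<and> a < 1 \<and> 0 < b \<and> b < 1 \<and>
           ((\<gamma> i - \<delta> < a \<and> a < b \<and> b < \<gamma> i) \<or> (\<gamma> i < b \<and> b < a \<and> a < \<gamma> i + \<delta>)) \<longrightarrow>
           (\<lambda>n. deriv (phi_mix p \<alpha> \<gamma>n n) a / deriv (phi_mix p \<alpha> \<gamma>n n) b) \<longlonglongrightarrow> 0"
proof (intro allI impI)
  fix i
  assume "i < p"
  have \<gamma>n_lim: "(\<lambda>n. \<gamma>n j n) \<longlonglongrightarrow> \<gamma> j" if "j < p" for j
    using bigo_inverse_imp_tendsto_0 [OF \<gamma>n_rate [OF that]] by (simp add: LIM_zero_iff)
  have \<gamma>_distinct: "\<gamma> j \<noteq> \<gamma> i" if "j < p" "j \<noteq> i" for j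
    using \<gamma>_strict [of i j] \<gamma>_strict [of j i] that \<open>i < p\<close> by (cases "i < j") auto
  obtain \<delta> where "\<delta> > 0" and separated: "\<And>a b j. 0 < a \<Longrightarrow> a < 1 \<Longrightarrow> 0 < b \<Longrightarrow> b < 1 \<Longrightarrow>
      (\<gamma> i - \<delta> < a \<and> a < b \<and> b < \<gamma> i) \<or> (\<gamma> i < b \<and> b < a \<and> a < \<gamma> i + \<delta>) \<Longrightarrow> j < p \<Longrightarrow>
      bin_kl (\<gamma> i) b < bin_kl (\<gamma> j) a"
    by (rule bin_kl_separation [of i p \<gamma>]) (use \<open>i < p\<close> \<gamma>_range \<gamma>_distinct in auto)
  have "(\<lambda>n. deriv (phi_mix p \<alpha> \<gamma>n n) a / deriv (phi_mix p \<alpha> \<gamma>n n) b) \<longlonglongrightarrow> 0"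
    if "0 < a" "a < 1" "0 < b" "b < 1"
      "(\<gamma> i - \<delta> < a \<and> a < b \<and> b < \<gamma> i) \<or> (\<gamma> i < b \<and> b < a \<and> a < \<gamma> i + \<delta>)" for a b
    using that separated \<open>i < p\<close> \<alpha>_range \<gamma>n_range \<gamma>n_lim
    by (intro phi_mix_deriv_ratio_tendsto_0 [where \<gamma> = \<gamma>]) auto
  with \<open>\<delta> > 0\<close> show "\<exists>\<delta>>0. \<forall>a b. 0 < a \<and> a < 1 \<and> 0 < b \<and> b < 1 \<and>
      ((\<gamma> i - \<delta> < a \<and> a < b \<and> b < \<gamma> i) \<or> (\<gamma> i < b \<and> b < a \<and> a < \<gamma> i + \<delta>)) \<longrightarrow>
      (\<lambda>n. deriv (phi_mix p \<alpha> \<gamma>n n) a / deriv (phi_mix p \<alpha> \<gamma>n n) b) \<longlonglongrightarrow> 0"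
    by blast
qed

end
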